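(* Let $\mathcal{T}$ denote the bounded linear operator on the quotient space $H_{ber}^2(D)/X$ induced by the operator $\mathcal{T}:\sum_{n\ge 0} a_n z^n\mapsto \sum_{n\ge 0} a_n z^{T(n)}$ on the Bergman space, where $X=\operatorname{span}\{1,z,z^2\}$. Then $\mathcal{T}$ is surjective on $H_{ber}^2(D)/X$. Moreover, if the Collatz conjecture holds, then \[ H_{ber}^2(D)/X=\overline{\bigcup_{n=1}^{\infty}\operatorname{Ker}(\mathcal{T}^n)}. \]
   Context: $T:\mathbb{Z}\to\mathbb{Z}$ is the (reduced) Collatz map: $T(n)=\frac{3n+1}{2}$ for odd $n$ and $T(n)=\frac n2$ for even $n$. $D$ is the open unit disk. $H_{ber}^2(D)$ is the Bergman space of holomorphic functions $f$ on $D$ with $\|f\|^2=\int_D|f|^2\,dA<\infty$ (so $\|z^n\|^2=\frac{\pi}{n+1}$). The operator $\mathcal{T}f(z)=(Sf)(\sqrt z)+\sqrt z\,(Af)(z^{3/2})$, with $Sf(z)=\frac{f(z)+f(-z)}2$, $Af(z)=\frac{f(z)-f(-z)}2$, acts on power series by $\sum a_nz^n\mapsto\sum a_n z^{T(n)}$ (i.e. $\mathcal{T}z^n=z^{T(n)}$); it is a bounded operator on $H_{ber}^2(D)$ and leaves $X=\operatorname{span}\{1,z,z^2\}$ invariant, hence induces a bounded operator on the quotient Banach space $H_{ber}^2(D)/X$. The Collatz conjecture is the statement that for every positive integer $n$ there is $k\ge 0$ with $T^k(n)=1$. *)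

theory Defs
  imports "HOL-Complex_Analysis.Complex_Analysis"
begin

definition collatzT :: "int \<Rightarrow> int" where
  "collatzT n = (if odd n then (3 * n + 1) div 2 else n div 2)"

definition collatz_conjecture :: bool where
  "collatz_conjecture \<longleftrightarrow> (\<forall>n::int. n > 0 \<longrightarrow> (\<exists>k::nat. (collatzT ^^ k) n = 1))"

text \<open>The Collatz map restricted to natural numbers (it maps nat to nat).\<close>
definition collatzN :: "nat \<Rightarrow> nat" where
  "collatzN n = nat (collatzT (int n))"

text \<open>Bergman space on the unit disk: holomorphic functions with square-integrable modulus.
  Functions are only considered on the disk (values outside are irrelevant).\<close>
definition bergman :: "(complex \<Rightarrow> complex) set" where
  "bergman = {f. f holomorphic_on ball 0 1 \<and>
                 set_integrable lborel (ball 0 1) (\<lambda>z. (cmod (f z))\<^sup>2)}"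

definition bnorm :: "(complex \<Rightarrow> complex) \<Rightarrow> real" where
  "bnorm f = sqrt (set_lebesgue_integral lborel (ball 0 1) (\<lambda>z. (cmod (f z))\<^sup>2))"

definition tcoeff :: "(complex \<Rightarrow> complex) \<Rightarrow> nat \<Rightarrow> complex" where
  "tcoeff f n = (deriv ^^ n) f 0 / of_nat (fact n)"

definition collatzOp :: "(complex \<Rightarrow> complex) \<Rightarrow> (complex \<Rightarrow> complex)" where
  "collatzOp f = (\<lambda>z. \<Sum>n. tcoeff f n * z ^ collatzN n)"

definition inX :: "(complex \<Rightarrow> complex) \<Rightarrow> bool" where
  "inX g \<longleftrightarrow> (\<exists>c0 c1 c2. \<forall>z\<in>ball 0 1. g z = c0 + c1 * z + c2 * z\<^sup>2)"

end

theory Submission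
  imports Defs
begin

text \<open>
  Since \<open>T (2 m) = m\<close>, the operator maps \<open>g (z\<^sup>2)\<close> to \<open>g\<close>, so surjectivity modulo \<open>X\<close> only
  needs \<open>g (z\<^sup>2)\<close> to lie in the Bergman space. Both this and the density statement rest on
  Parseval's identity \<open>\<parallel>f\<parallel>\<^sup>2 = (\<Sum>n. \<bar>a\<^sub>n\<bar>\<^sup>2 \<parallel>z\<^bsup>n\<^esup>\<parallel>\<^sup>2)\<close>, which comes from the orthogonality of
  the monomials on discs, i.e. from the rotation invariance of Lebesgue measure on \<open>\<complex>\<close> (a
  rotation is a product of three shears). Parseval gives \<open>\<parallel>g (z\<^sup>2)\<parallel> \<le> \<parallel>g\<parallel>\<close>, since
  \<open>\<parallel>z\<^bsup>2m\<^esup>\<parallel> \<le> \<parallel>z\<^bsup>m\<^esup>\<parallel>\<close>, and it shows that the Taylor polynomials of \<open>f\<close> converge to \<open>f\<close>.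
  Under the Collatz conjecture every exponent of a polynomial is eventually driven into
  \<open>{0, 1, 2}\<close>, which \<open>T\<close> preserves, so some power of the operator maps the polynomial into \<open>X\<close>.
\<close>

section \<open>Rotation invariance of Lebesgue measure on the plane\<close>

lemma borel_measurable_Complex [measurable (raw)]:
  "f \<in> borel_measurable M \<Longrightarrow> g \<in> borel_measurable M \<Longrightarrow> (\<lambda>x. Complex (f x) (g x)) \<in> borel_measurable M"
  unfolding Complex_eq by (intro borel_measurable_add borel_measurable_times borel_measurable_of_real) auto

lemma lborel_eq_distr_Complex:
  "(lborel :: complex measure) = distr (lborel \<Otimes>\<^sub>M lborel) borel (\<lambda>(x, y). Complex x y)"
proof (rule lborel_eqI)
  fix l u :: complex
  assume le: "\<And>b. b \<in> Basis \<Longrightarrow> l \<bullet> b \<le> u \<bullet> b"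
  have "emeasure (distr (lborel \<Otimes>\<^sub>M lborel) borel (\<lambda>(x, y). Complex x y)) (box l u)
      = emeasure (lborel \<Otimes>\<^sub>M lborel) ((\<lambda>(x, y). Complex x y) -` box l u)"
    by (subst emeasure_distr) (auto simp: space_pair_measure)
  also have "(\<lambda>(x, y). Complex x y) -` box l u = box (Re l, Im l) (Re u, Im u)"
    by (auto simp: box_def Basis_complex_def Basis_prod_def inner_complex_def)
  also have "emeasure (lborel \<Otimes>\<^sub>M lborel) (box (Re l, Im l) (Re u, Im u)) = (\<Prod>b\<in>Basis. (u - l) \<bullet> b)"
    using le[of 1] le[of \<i>]
    by (simp add: lborel_prod emeasure_lborel_box_eq Basis_complex_def Basis_prod_def inner_complex_def)
  finally show "emeasure (distr (lborel \<Otimes>\<^sub>M lborel) borel (\<lambda>(x, y). Complex x y)) (box l u)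
      = (\<Prod>b\<in>Basis. (u - l) \<bullet> b)" .
qed simp

lemma distr_lborel_shear_snd:
  fixes f :: "real \<Rightarrow> real"
  assumes [measurable]: "f \<in> borel_measurable borel"
  shows "distr (lborel \<Otimes>\<^sub>M lborel) (lborel \<Otimes>\<^sub>M lborel) (\<lambda>(x, y). (x, y + f x)) = lborel \<Otimes>\<^sub>M lborel"
proof (rule measure_eqI)
  fix A :: "(real \<times> real) set"
  assume "A \<in> sets (distr (lborel \<Otimes>\<^sub>M lborel) (lborel \<Otimes>\<^sub>M lborel) (\<lambda>(x, y). (x, y + f x)))"
  then have A [measurable]: "A \<in> sets (lborel \<Otimes>\<^sub>M lborel)"
    by simp
  have shear: "(\<lambda>(x, y). (x, y + f x)) \<in> measurable (lborel \<Otimes>\<^sub>M lborel) (lborel \<Otimes>\<^sub>M lborel)"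
    by measurable
  have fibre: "Pair x -` ((\<lambda>(x, y). (x, y + f x)) -` A) = (+) (f x) -` (Pair x -` A)" for x
    by (auto simp: add.commute)
  have translate: "emeasure lborel ((+) (f x) -` (Pair x -` A)) = emeasure lborel (Pair x -` A)" for x
  proof -
    have "Pair x -` A \<in> sets borel"
      using sets_Pair1[OF A] by simp
    then have "emeasure (distr lborel borel ((+) (f x))) (Pair x -` A)
        = emeasure lborel ((+) (f x) -` (Pair x -` A))"
      by (subst emeasure_distr) auto
    then show ?thesis
      by (simp add: lborel_distr_plus)
  qed
  have "emeasure (distr (lborel \<Otimes>\<^sub>M lborel) (lborel \<Otimes>\<^sub>M lborel) (\<lambda>(x, y). (x, y + f x))) A
      = emeasure (lborel \<Otimes>\<^sub>M lborel) ((\<lambda>(x, y). (x, y + f x)) -` A)"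
    using emeasure_distr[OF shear A] by (simp add: space_pair_measure)
  also have "\<dots> = (\<integral>\<^sup>+x. emeasure lborel (Pair x -` A) \<partial>lborel)"
  proof -
    have "(\<lambda>(x, y). (x, y + f x)) -` A \<in> sets (lborel \<Otimes>\<^sub>M lborel)"
      using measurable_sets[OF shear A] by (simp add: space_pair_measure)
    then show ?thesis
      by (simp only: lborel.emeasure_pair_measure_alt fibre translate)
  qed
  also have "\<dots> = emeasure (lborel \<Otimes>\<^sub>M lborel) A"
    by (simp only: lborel.emeasure_pair_measure_alt[OF A])
  finally show "emeasure (distr (lborel \<Otimes>\<^sub>M lborel) (lborel \<Otimes>\<^sub>M lborel) (\<lambda>(x, y). (x, y + f x))) A
      = emeasure (lborel \<Otimes>\<^sub>M lborel) A" .
qed simp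

lemma distr_lborel_shear_fst:
  fixes f :: "real \<Rightarrow> real"
  assumes [measurable]: "f \<in> borel_measurable borel"
  shows "distr (lborel \<Otimes>\<^sub>M lborel) (lborel \<Otimes>\<^sub>M lborel) (\<lambda>(x, y). (x + f y, y)) = lborel \<Otimes>\<^sub>M lborel"
proof -
  have "(\<lambda>(x, y). (x + f y, y)) = (\<lambda>(x, y). (y, x)) \<circ> (\<lambda>(x, y). (x, y + f x)) \<circ> (\<lambda>(x, y). (y, x))"
    by auto
  then have "distr (lborel \<Otimes>\<^sub>M lborel) (lborel \<Otimes>\<^sub>M lborel) (\<lambda>(x, y). (x + f y, y))
      = distr (distr (distr (lborel \<Otimes>\<^sub>M lborel) (lborel \<Otimes>\<^sub>M lborel) (\<lambda>(x, y). (y, x)))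
          (lborel \<Otimes>\<^sub>M lborel) (\<lambda>(x, y). (x, y + f x))) (lborel \<Otimes>\<^sub>M lborel) (\<lambda>(x, y). (y, x))"
    by (simp add: distr_distr comp_assoc)
  then show ?thesis
    by (simp add: lborel_pair.distr_pair_swap[symmetric] distr_lborel_shear_snd)
qed

text \<open>With \<open>t = tan (a / 2)\<close>, the right-hand side applies the shears \<open>(x, y) \<mapsto> (x - t y, y)\<close>,
  \<open>(x, y) \<mapsto> (x, y + x sin a)\<close> and \<open>(x, y) \<mapsto> (x - t y, y)\<close> in turn.\<close>

lemma cis_mult_Complex_eq_shears:
  assumes "cos a \<noteq> -1"
  defines "t \<equiv> sin a / (1 + cos a)"
  shows "cis a * Complex x y = Complex (x - t * y - t * (y + sin a * (x - t * y))) (y + sin a * (x - t * y))"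
proof -
  have t: "t * (1 + cos a) = sin a"
    using assms by (simp add: t_def)
  have "t * sin a * (1 + cos a) = sin a * sin a"
    using t by (metis mult.commute mult.assoc)
  also have "\<dots> = (1 - cos a) * (1 + cos a)"
    using sin_cos_squared_add[of a] by (simp add: power2_eq_square algebra_simps)
  finally have ts: "t * sin a = 1 - cos a"
    using assms by simp
  have "x - t * y - t * (y + sin a * (x - t * y)) = x - (t * sin a) * x - y * t * (2 - t * sin a)"
    by (simp add: algebra_simps)
  also have "\<dots> = x * cos a - y * (t * (1 + cos a))"
    by (simp add: ts algebra_simps)
  finally have re: "x - t * y - t * (y + sin a * (x - t * y)) = x * cos a - y * sin a"
    by (simp add: t)
  have "y + sin a * (x - t * y) = x * sin a + y * (1 - t * sin a)"
    by (simp add: algebra_simps)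
  then have im: "y + sin a * (x - t * y) = x * sin a + y * cos a"
    by (simp add: ts)
  show ?thesis
    unfolding re unfolding im by (simp add: complex_eq_iff mult.commute)
qed

lemma distr_lborel_mult_cis_cos_neq:
  assumes "cos a \<noteq> -1"
  shows "distr lborel borel (\<lambda>z. cis a * z) = (lborel :: complex measure)"
proof -
  define t where "t = sin a / (1 + cos a)"
  define C :: "real \<times> real \<Rightarrow> complex" where "C = (\<lambda>(x, y). Complex x y)"
  define Sx :: "real \<times> real \<Rightarrow> real \<times> real" where "Sx = (\<lambda>(x, y). (x + - t * y, y))"
  define Sy :: "real \<times> real \<Rightarrow> real \<times> real" where "Sy = (\<lambda>(x, y). (x, y + sin a * x))"
  have [measurable]: "C \<in> borel_measurable (lborel \<Otimes>\<^sub>M lborel)"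
    "Sx \<in> measurable (lborel \<Otimes>\<^sub>M lborel) (lborel \<Otimes>\<^sub>M lborel)"
    "Sy \<in> measurable (lborel \<Otimes>\<^sub>M lborel) (lborel \<Otimes>\<^sub>M lborel)"
    unfolding C_def Sx_def Sy_def by measurable
  have "(\<lambda>z. cis a * z) \<circ> C = C \<circ> Sx \<circ> Sy \<circ> Sx"
    by (auto simp: C_def Sx_def Sy_def t_def cis_mult_Complex_eq_shears[OF assms])
  then have "distr lborel borel (\<lambda>z. cis a * z)
      = distr (distr (distr (distr (lborel \<Otimes>\<^sub>M lborel) (lborel \<Otimes>\<^sub>M lborel) Sx)
          (lborel \<Otimes>\<^sub>M lborel) Sy) (lborel \<Otimes>\<^sub>M lborel) Sx) borel C"
    by (simp add: lborel_eq_distr_Complex C_def[symmetric] distr_distr comp_assoc)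
  also have "\<dots> = lborel"
    using distr_lborel_shear_fst[of "\<lambda>y. - t * y"] distr_lborel_shear_snd[of "\<lambda>x. sin a * x"]
    by (simp add: Sx_def Sy_def C_def lborel_eq_distr_Complex[symmetric])
  finally show ?thesis .
qed

lemma distr_lborel_mult_cis:
  "distr lborel borel (\<lambda>z. cis a * z) = (lborel :: complex measure)"
proof (cases "cos a = -1")
  case True
  have half: "cos (a / 2) \<noteq> -1"
    using True cos_double_cos[of "a / 2"] by auto
  have "(\<lambda>z. cis a * z) = (\<lambda>z. cis (a / 2) * z) \<circ> (\<lambda>z. cis (a / 2) * z)"
    by (simp add: fun_eq_iff mult.assoc[symmetric] cis_mult)
  then have "distr lborel borel (\<lambda>z. cis a * z)
      = distr (distr lborel borel (\<lambda>z. cis (a / 2) * z)) borel (\<lambda>z. cis (a / 2) * z)"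
    by (simp only:) (rule distr_distr[symmetric]; measurable)
  then show ?thesis
    by (simp add: distr_lborel_mult_cis_cos_neq[OF half])
qed (rule distr_lborel_mult_cis_cos_neq)

lemma lborel_integral_mult_cis:
  fixes g :: "complex \<Rightarrow> 'b::{banach, second_countable_topology}"
  assumes [measurable]: "g \<in> borel_measurable borel"
  shows "(\<integral>z. g (cis a * z) \<partial>lborel) = (\<integral>z. g z \<partial>lborel)"
proof -
  have "(\<integral>z. g z \<partial>lborel) = (\<integral>z. g z \<partial>distr lborel borel (\<lambda>z. cis a * z))"
    by (simp add: distr_lborel_mult_cis)
  also have "\<dots> = (\<integral>z. g (cis a * z) \<partial>lborel)"
    by (rule integral_distr) auto
  finally show ?thesis by simp
qed

section \<open>Parseval's identity for the Bergman space\<close>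

definition disc_moment :: "nat \<Rightarrow> real \<Rightarrow> real" where
  "disc_moment n r = (\<integral>z\<in>ball 0 r. cmod z ^ (2 * n) \<partial>lborel)"

lemma set_integral_ball_power_cnj_power:
  "(\<integral>z\<in>ball 0 r. z ^ j * cnj z ^ k \<partial>lborel) = (if j = k then of_real (disc_moment j r) else 0)"
proof (cases "j = k")
  case True
  have "z ^ j * cnj z ^ j = of_real (cmod z ^ (2 * j))" for z
    by (simp only: power_mult_distrib[symmetric] complex_norm_square[symmetric]) (simp add: power_mult)
  with True show ?thesis
    by (simp add: disc_moment_def set_integral_complex_of_real[symmetric])
next
  case False
  \<comment> \<open>Rotating by \<open>pi / \<bar>j - k\<bar>\<close> multiplies the integrand by \<open>-1\<close>.\<close>
  define a where "a = pi / real (if j > k then j - k else k - j)"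
  define c where "c = cis a ^ j * cnj (cis a) ^ k"
  have "(real j - real k) * a = pi \<or> (real j - real k) * a = - pi"
    using False by (auto simp: a_def of_nat_diff field_simps)
  then have "cis ((real j - real k) * a) = -1"
    by (auto simp: complex_eq_iff)
  moreover have "c = cis ((real j - real k) * a)"
    unfolding c_def cis_cnj Complex.DeMoivre cis_mult by (simp add: algebra_simps)
  ultimately have c: "c = -1"
    by simp
  define F where "F z = indicator (ball 0 r) z *\<^sub>R (z ^ j * cnj z ^ k)" for z :: complex
  have [measurable]: "F \<in> borel_measurable borel"
    unfolding F_def
    by (intro borel_measurable_scaleR borel_measurable_indicator borel_measurable_continuous_onI)
      (auto intro!: continuous_intros)
  have "F (cis a * z) = c * F z" for z
    by (simp add: F_def c_def norm_mult indicator_def power_mult_distrib)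
  then have "integral\<^sup>L lborel F = c * integral\<^sup>L lborel F"
    using lborel_integral_mult_cis[of F a] by simp
  with c False show ?thesis
    by (simp add: set_lebesgue_integral_def F_def[abs_def])
qed

lemma set_integrable_ball_continuous:
  fixes g :: "complex \<Rightarrow> 'b::{banach, second_countable_topology}"
  assumes "continuous_on (cball 0 r) g"
  shows "set_integrable lborel (ball 0 r) g"
proof -
  have "set_integrable lborel (cball 0 r) g"
    unfolding set_integrable_def by (rule borel_integrable_compact[OF compact_cball assms])
  then show ?thesis
    by (rule set_integrable_subset) auto
qed

lemma set_integral_sum:
  fixes f :: "'i \<Rightarrow> 'a \<Rightarrow> 'b::{banach, second_countable_topology}"
  assumes "\<And>i. i \<in> I \<Longrightarrow> set_integrable M A (f i)"
  shows "(\<integral>x\<in>A. (\<Sum>i\<in>I. f i x) \<partial>M) = (\<Sum>i\<in>I. \<integral>x\<in>A. f i x \<partial>M)"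
  using assms unfolding set_lebesgue_integral_def set_integrable_def
  by (simp add: scaleR_sum_right integral_sum)

lemma set_integral_ball_norm_square_poly:
  fixes a :: "nat \<Rightarrow> complex"
  shows "(\<integral>z\<in>ball 0 r. (cmod (\<Sum>n<N. a n * z ^ n))\<^sup>2 \<partial>lborel) = (\<Sum>n<N. (cmod (a n))\<^sup>2 * disc_moment n r)"
proof -
  have integrable: "set_integrable lborel (ball 0 r) (\<lambda>z::complex. c * (z ^ j * cnj z ^ k))"
    "set_integrable lborel (ball 0 r) (\<lambda>z::complex. \<Sum>k\<in>K. c' k * (z ^ j * cnj z ^ k))"
    for c c' K j k
    by (intro set_integrable_ball_continuous continuous_intros)+
  have "complex_of_real (\<integral>z\<in>ball 0 r. (cmod (\<Sum>n<N. a n * z ^ n))\<^sup>2 \<partial>lborel)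
      = (\<integral>z\<in>ball 0 r. (\<Sum>j<N. \<Sum>k<N. a j * cnj (a k) * (z ^ j * cnj z ^ k)) \<partial>lborel)"
    unfolding set_integral_complex_of_real[symmetric] complex_norm_square
    by (simp add: sum_product algebra_simps)
  also have "\<dots> = (\<Sum>j<N. \<Sum>k<N. a j * cnj (a k) * (\<integral>z\<in>ball 0 r. z ^ j * cnj z ^ k \<partial>lborel))"
    by (simp add: set_integral_sum integrable)
  also have "\<dots> = (\<Sum>j<N. a j * cnj (a j) * of_real (disc_moment j r))"
    by (simp add: set_integral_ball_power_cnj_power if_distrib sum.delta cong: if_cong)
  also have "\<dots> = complex_of_real (\<Sum>n<N. (cmod (a n))\<^sup>2 * disc_moment n r)"
    by (simp flip: complex_norm_square)
  finally show ?thesis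
    by (simp only: of_real_eq_iff)
qed

lemma power_series_partial_sums_bounded:
  fixes c :: "nat \<Rightarrow> complex"
  assumes summable: "\<And>z. z \<in> ball 0 R \<Longrightarrow> summable (\<lambda>n. c n * z ^ n)"
    and r: "0 \<le> r" "r < R"
  shows "\<exists>M. \<forall>N. \<forall>z\<in>ball 0 r. cmod (\<Sum>n<N. c n * z ^ n) \<le> M"
proof -
  define \<rho> where "\<rho> = (r + R) / 2"
  have \<rho>: "r < \<rho>" "\<rho> < R"
    using r by (auto simp: \<rho>_def)
  have "summable (\<lambda>n. norm (c n * complex_of_real r ^ n))"
    by (rule powser_insidea[OF summable[of "complex_of_real \<rho>"]]) (use r \<rho> in auto)
  then have summable_r: "summable (\<lambda>n. cmod (c n) * r ^ n)"
    using r by (simp add: norm_mult norm_power)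
  have "cmod (\<Sum>n<N. c n * z ^ n) \<le> (\<Sum>n. cmod (c n) * r ^ n)" if "z \<in> ball 0 r" for N z
  proof -
    have "cmod (\<Sum>n<N. c n * z ^ n) \<le> (\<Sum>n<N. cmod (c n) * cmod z ^ n)"
      by (rule order_trans[OF norm_sum]) (simp add: norm_mult norm_power)
    also have "\<dots> \<le> (\<Sum>n<N. cmod (c n) * r ^ n)"
      using that by (intro sum_mono mult_left_mono power_mono) auto
    also have "\<dots> \<le> (\<Sum>n. cmod (c n) * r ^ n)"
      using r by (intro sum_le_suminf[OF summable_r]) auto
    finally show ?thesis .
  qed
  then show ?thesis
    by blast
qed

lemma sums_set_integral_ball_power_series:
  fixes c :: "nat \<Rightarrow> complex" and H :: "complex \<Rightarrow> complex"
  assumes sums: "\<And>z. z \<in> ball 0 R \<Longrightarrow> (\<lambda>n. c n * z ^ n) sums H z"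
    and r: "0 \<le> r" "r < R"
  shows "(\<lambda>n. (cmod (c n))\<^sup>2 * disc_moment n r) sums (\<integral>z\<in>ball 0 r. (cmod (H z))\<^sup>2 \<partial>lborel)"
proof -
  define S where "S N z = (\<Sum>n<N. c n * z ^ n)" for N z
  obtain M where bound: "\<And>N z. z \<in> ball 0 r \<Longrightarrow> cmod (S N z) \<le> M"
    using power_series_partial_sums_bounded[OF sums_summable[OF sums] r] unfolding S_def by blast
  define s where "s N z = indicator (ball 0 r) z *\<^sub>R (cmod (S N z))\<^sup>2" for N z
  define f where "f z = indicator (ball 0 r) z *\<^sub>R (cmod (H z))\<^sup>2" for z
  have s_measurable: "s N \<in> borel_measurable lborel" for N
    unfolding s_def S_def
    by (intro borel_measurable_scaleR borel_measurable_indicator borel_measurable_continuous_onI)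
      (auto intro!: continuous_intros)
  have s_lim: "(\<lambda>N. s N z) \<longlonglongrightarrow> f z" for z
  proof (cases "z \<in> ball 0 r")
    case True
    then have "(\<lambda>N. S N z) \<longlonglongrightarrow> H z"
      using sums[of z] r by (simp add: sums_def S_def)
    with True show ?thesis
      by (simp add: s_def f_def tendsto_intros)
  qed (simp add: s_def f_def)
  have "(\<lambda>N. integral\<^sup>L lborel (s N)) \<longlonglongrightarrow> integral\<^sup>L lborel f"
  proof (rule integral_dominated_convergence)
    show "integrable lborel (\<lambda>z::complex. indicator (ball 0 r) z *\<^sub>R M\<^sup>2)"
      using set_integrable_ball_continuous[of r "\<lambda>_. M\<^sup>2"] by (simp add: set_integrable_def)
    show "AE z in lborel. norm (s N z) \<le> indicator (ball 0 r) z *\<^sub>R M\<^sup>2" for N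
      using bound by (intro AE_I2) (auto simp: s_def indicator_def power_mono)
  qed (use s_measurable s_lim borel_measurable_LIMSEQ_real[OF s_lim s_measurable] in auto)
  moreover have "integral\<^sup>L lborel (s N) = (\<Sum>n<N. (cmod (c n))\<^sup>2 * disc_moment n r)" for N
    using set_integral_ball_norm_square_poly[where a=c and r=r and N=N]
    by (simp add: s_def[abs_def] S_def set_lebesgue_integral_def)
  ultimately show ?thesis
    by (simp add: sums_def set_lebesgue_integral_def f_def[abs_def])
qed

lemma tcoeff_sums:
  assumes "f holomorphic_on ball 0 1" "z \<in> ball 0 1"
  shows "(\<lambda>n. tcoeff f n * z ^ n) sums f z"
  using holomorphic_power_series[OF assms] by (simp add: tcoeff_def)

lemma tcoeff_eqI:
  fixes c :: "nat \<Rightarrow> complex" and H :: "complex \<Rightarrow> complex"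
  assumes r: "0 < r" and sums: "\<And>z. z \<in> ball 0 r \<Longrightarrow> (\<lambda>n. c n * z ^ n) sums H z"
  shows "tcoeff H n = c n"
proof -
  have "summable (\<lambda>n. c n * complex_of_real (r / 2) ^ n)"
    using sums[of "complex_of_real (r / 2)"] r by (auto simp: sums_iff)
  then have "conv_radius c \<ge> norm (complex_of_real (r / 2))"
    by (rule conv_radius_geI)
  then have "fps_conv_radius (Abs_fps c) > 0"
    using r by (simp add: fps_conv_radius_def) (meson ereal_less(2) half_gt_zero less_le_trans)
  moreover have "eventually (\<lambda>z. eval_fps (Abs_fps c) z = H z) (nhds 0)"
  proof -
    have "eventually (\<lambda>z. z \<in> ball 0 r) (nhds (0::complex))"
      using r by (intro eventually_nhds_in_open) auto
    then show ?thesis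
      by eventually_elim (use sums in \<open>simp add: eval_fps_def sums_iff\<close>)
  qed
  ultimately have "H has_fps_expansion Abs_fps c"
    by (simp add: has_fps_expansion_def)
  then show ?thesis
    using fps_nth_fps_expansion[of H "Abs_fps c" n] by (simp add: tcoeff_def)
qed

lemma ennreal_set_integral:
  fixes F :: "'a \<Rightarrow> real"
  assumes "set_integrable M A F" "\<And>x. x \<in> A \<Longrightarrow> 0 \<le> F x"
  shows "ennreal (\<integral>x\<in>A. F x \<partial>M) = (\<integral>\<^sup>+x\<in>A. ennreal (F x) \<partial>M)"
proof -
  have "ennreal (\<integral>x\<in>A. F x \<partial>M) = (\<integral>\<^sup>+x. ennreal (indicator A x *\<^sub>R F x) \<partial>M)"
    using assms unfolding set_integrable_def set_lebesgue_integral_def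
    by (intro nn_integral_eq_integral[symmetric]) (auto simp: indicator_def)
  also have "\<dots> = (\<integral>\<^sup>+x\<in>A. ennreal (F x) \<partial>M)"
    by (intro nn_integral_cong) (auto simp: indicator_def)
  finally show ?thesis .
qed

lemma SUP_nn_set_integral_ball:
  fixes F :: "complex \<Rightarrow> ennreal"
  assumes [measurable]: "F \<in> borel_measurable borel" and r: "incseq r" "r \<longlonglongrightarrow> R"
  shows "(SUP k. \<integral>\<^sup>+z\<in>ball 0 (r k). F z \<partial>lborel) = (\<integral>\<^sup>+z\<in>ball 0 R. F z \<partial>lborel)"
proof -
  have balls: "incseq (\<lambda>k. ball (0::complex) (r k))"
    using r(1) by (force simp: incseq_def)
  have "(\<Union>k. ball 0 (r k)) = ball (0::complex) R"
  proof (intro equalityI subsetI)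
    fix z :: complex
    assume "z \<in> ball 0 R"
    then have "eventually (\<lambda>k. norm z < r k) sequentially"
      using order_tendstoD(1)[OF r(2)] by simp
    then obtain k where "norm z < r k"
      by (auto simp: eventually_sequentially)
    then show "z \<in> (\<Union>k. ball 0 (r k))"
      by auto
  next
    fix z :: complex
    assume "z \<in> (\<Union>k. ball 0 (r k))"
    then show "z \<in> ball 0 R"
      using incseq_le[OF r] by (force intro: less_le_trans)
  qed
  moreover have "range (\<lambda>k. ball (0::complex) (r k)) \<subseteq> sets (density lborel F)"
    by auto
  then have "(SUP k. emeasure (density lborel F) (ball 0 (r k)))
      = emeasure (density lborel F) (\<Union>k. ball 0 (r k))"
    by (rule SUP_emeasure_incseq[OF _ balls])
  ultimately show ?thesis
    by (simp add: emeasure_density)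
qed

lemma disc_moment_nonneg: "0 \<le> disc_moment n r"
  unfolding disc_moment_def set_lebesgue_integral_def
  by (intro integral_nonneg_AE) (auto simp: indicator_def)

lemma ennreal_disc_moment:
  "ennreal (disc_moment n r) = (\<integral>\<^sup>+z\<in>ball 0 r. ennreal (cmod z ^ (2 * n)) \<partial>lborel)"
  unfolding disc_moment_def
  by (intro ennreal_set_integral set_integrable_ball_continuous continuous_intros) auto

lemma borel_measurable_indicator_disc_norm_square:
  "H holomorphic_on ball 0 1 \<Longrightarrow> (\<lambda>z. indicator (ball 0 1) z *\<^sub>R (cmod (H z))\<^sup>2) \<in> borel_measurable borel"
  by (intro borel_measurable_continuous_on_indicator continuous_intros holomorphic_on_imp_continuous_on) auto

lemma nn_set_integral_ball_norm_square:
  assumes holo: "H holomorphic_on ball 0 1" and r: "0 \<le> r" "r < 1"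
  shows "(\<integral>\<^sup>+z\<in>ball 0 r. ennreal ((cmod (H z))\<^sup>2) \<partial>lborel)
    = (\<Sum>n. ennreal ((cmod (tcoeff H n))\<^sup>2 * disc_moment n r))"
proof -
  have "continuous_on (cball 0 r) H"
    using r by (intro continuous_on_subset[OF holomorphic_on_imp_continuous_on[OF holo]]) auto
  then have "(\<integral>\<^sup>+z\<in>ball 0 r. ennreal ((cmod (H z))\<^sup>2) \<partial>lborel)
      = ennreal (\<integral>z\<in>ball 0 r. (cmod (H z))\<^sup>2 \<partial>lborel)"
    by (intro ennreal_set_integral[symmetric] set_integrable_ball_continuous continuous_intros) auto
  also have "\<dots> = (\<Sum>n. ennreal ((cmod (tcoeff H n))\<^sup>2 * disc_moment n r))"
    using tcoeff_sums[OF holo] r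
    by (intro suminf_ennreal_eq[symmetric] sums_set_integral_ball_power_series)
      (auto simp: disc_moment_nonneg)
  finally show ?thesis .
qed

lemma SUP_nn_set_integral_ball_norm_square:
  assumes holo: "H holomorphic_on ball 0 1" and r: "incseq r" "r \<longlonglongrightarrow> 1"
  shows "(SUP k. \<integral>\<^sup>+z\<in>ball 0 (r k). ennreal ((cmod (H z))\<^sup>2) \<partial>lborel)
    = (\<integral>\<^sup>+z\<in>ball 0 1. ennreal ((cmod (H z))\<^sup>2) \<partial>lborel)"
proof -
  define F where "F z = ennreal (indicator (ball 0 1) z *\<^sub>R (cmod (H z))\<^sup>2)" for z
  have "F \<in> borel_measurable borel"
    unfolding F_def by (intro measurable_compose[OF _ measurable_ennreal]
        borel_measurable_indicator_disc_norm_square holo)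
  then have "(SUP k. \<integral>\<^sup>+z\<in>ball 0 (r k). F z \<partial>lborel) = (\<integral>\<^sup>+z\<in>ball 0 1. F z \<partial>lborel)"
    by (rule SUP_nn_set_integral_ball[OF _ r])
  moreover have "F z * indicator (ball 0 \<rho>) z = ennreal ((cmod (H z))\<^sup>2) * indicator (ball 0 \<rho>) z"
    if "\<rho> \<le> 1" for z \<rho>
    using that by (cases "norm z < \<rho>") (auto simp: F_def indicator_def)
  ultimately show ?thesis
    using incseq_le[OF r] by simp
qed

lemma nn_set_integral_disc_norm_square:
  assumes holo: "H holomorphic_on ball 0 1"
  shows "(\<integral>\<^sup>+z\<in>ball 0 1. ennreal ((cmod (H z))\<^sup>2) \<partial>lborel)
    = (\<Sum>n. ennreal ((cmod (tcoeff H n))\<^sup>2 * disc_moment n 1))"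
proof -
  define r where "r k = 1 - 1 / real (Suc k)" for k
  have r: "0 \<le> r k" "r k < 1" for k
    by (auto simp: r_def field_simps)
  have r_incseq: "incseq r"
    by (intro incseq_SucI) (simp add: r_def field_simps)
  have "(\<lambda>k. 1 / real (Suc k)) \<longlonglongrightarrow> 0"
    using LIMSEQ_Suc[OF lim_1_over_n] by simp
  from tendsto_diff[OF tendsto_const this, of 1] have r_lim: "r \<longlonglongrightarrow> 1"
    by (simp add: r_def[abs_def])
  define M where "M n k = (\<integral>\<^sup>+z\<in>ball 0 (r k). ennreal (cmod z ^ (2 * n)) \<partial>lborel)" for n k
  have M_incseq: "incseq (M n)" for n
    unfolding M_def using r_incseq
    by (intro incseq_SucI nn_set_integral_set_mono) (auto simp: incseq_Suc_iff, meson less_le_trans)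
  have "(\<integral>\<^sup>+z\<in>ball 0 1. ennreal ((cmod (H z))\<^sup>2) \<partial>lborel)
      = (SUP k. \<Sum>n. ennreal ((cmod (tcoeff H n))\<^sup>2) * M n k)"
    using nn_set_integral_ball_norm_square[OF holo r]
    by (simp add: SUP_nn_set_integral_ball_norm_square[OF holo r_incseq r_lim, symmetric]
        M_def ennreal_mult ennreal_disc_moment[symmetric] disc_moment_nonneg)
  also have "\<dots> = (\<Sum>n. SUP k. ennreal ((cmod (tcoeff H n))\<^sup>2) * M n k)"
    using M_incseq by (intro ennreal_suminf_SUP_eq[symmetric] incseq_SucI mult_left_mono)
      (auto simp: incseq_Suc_iff)
  also have "\<dots> = (\<Sum>n. ennreal ((cmod (tcoeff H n))\<^sup>2) * ennreal (disc_moment n 1))"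
    unfolding SUP_mult_left_ennreal[symmetric] M_def ennreal_disc_moment
    by (subst SUP_nn_set_integral_ball[OF _ r_incseq r_lim]) auto
  also have "\<dots> = (\<Sum>n. ennreal ((cmod (tcoeff H n))\<^sup>2 * disc_moment n 1))"
    by (simp add: ennreal_mult disc_moment_nonneg)
  finally show ?thesis .
qed

lemma set_integrable_disc_iff_summable:
  assumes holo: "H holomorphic_on ball 0 1"
  shows "set_integrable lborel (ball 0 1) (\<lambda>z. (cmod (H z))\<^sup>2)
    \<longleftrightarrow> summable (\<lambda>n. (cmod (tcoeff H n))\<^sup>2 * disc_moment n 1)"
proof -
  have "(\<lambda>z. indicator (ball 0 1) z *\<^sub>R (cmod (H z))\<^sup>2) \<in> borel_measurable lborel"
    using borel_measurable_indicator_disc_norm_square[OF holo] by simp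
  moreover have "(\<integral>\<^sup>+z. ennreal (norm (indicator (ball 0 1) z *\<^sub>R (cmod (H z))\<^sup>2)) \<partial>lborel)
      = (\<integral>\<^sup>+z\<in>ball 0 1. ennreal ((cmod (H z))\<^sup>2) \<partial>lborel)"
    by (intro nn_integral_cong) (auto simp: indicator_def)
  ultimately have "set_integrable lborel (ball 0 1) (\<lambda>z. (cmod (H z))\<^sup>2)
      \<longleftrightarrow> (\<integral>\<^sup>+z\<in>ball 0 1. ennreal ((cmod (H z))\<^sup>2) \<partial>lborel) < \<infinity>"
    unfolding set_integrable_def integrable_iff_bounded by simp
  also have "\<dots> \<longleftrightarrow> summable (\<lambda>n. (cmod (tcoeff H n))\<^sup>2 * disc_moment n 1)"
  proof -
    let ?t = "\<lambda>n. (cmod (tcoeff H n))\<^sup>2 * disc_moment n 1"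
    have nonneg: "\<And>n. 0 \<le> ?t n"
      by (simp add: disc_moment_nonneg)
    show ?thesis
      unfolding nn_set_integral_disc_norm_square[OF holo]
    proof
      assume "(\<Sum>n. ennreal (?t n)) < \<infinity>"
      then show "summable ?t"
        using summable_suminf_not_top[of ?t, OF nonneg] by simp
    next
      assume "summable ?t"
      then show "(\<Sum>n. ennreal (?t n)) < \<infinity>"
        using ennreal_suminf_neq_top[of ?t, OF _ nonneg] by (simp add: less_top[symmetric])
    qed
  qed
  finally show ?thesis .
qed

lemma sums_set_integral_disc:
  assumes holo: "H holomorphic_on ball 0 1"
    and summable: "summable (\<lambda>n. (cmod (tcoeff H n))\<^sup>2 * disc_moment n 1)"
  shows "(\<lambda>n. (cmod (tcoeff H n))\<^sup>2 * disc_moment n 1) sums (\<integral>z\<in>ball 0 1. (cmod (H z))\<^sup>2 \<partial>lborel)"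
proof -
  have "ennreal (\<integral>z\<in>ball 0 1. (cmod (H z))\<^sup>2 \<partial>lborel) = (\<integral>\<^sup>+z\<in>ball 0 1. ennreal ((cmod (H z))\<^sup>2) \<partial>lborel)"
    using set_integrable_disc_iff_summable[OF holo] summable by (intro ennreal_set_integral) auto
  also have "\<dots> = ennreal (\<Sum>n. (cmod (tcoeff H n))\<^sup>2 * disc_moment n 1)"
    unfolding nn_set_integral_disc_norm_square[OF holo]
    using summable by (intro suminf_ennreal2) (auto simp: disc_moment_nonneg)
  finally have "(\<integral>z\<in>ball 0 1. (cmod (H z))\<^sup>2 \<partial>lborel) = (\<Sum>n. (cmod (tcoeff H n))\<^sup>2 * disc_moment n 1)"
    by (subst (asm) ennreal_inj) (auto intro!: suminf_nonneg summable integral_nonneg_AE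
        simp: disc_moment_nonneg set_lebesgue_integral_def)
  with summable show ?thesis
    by (simp add: summable_sums)
qed

lemma bergman_iff_summable:
  "f \<in> bergman \<longleftrightarrow> f holomorphic_on ball 0 1 \<and> summable (\<lambda>n. (cmod (tcoeff f n))\<^sup>2 * disc_moment n 1)"
  using set_integrable_disc_iff_summable by (auto simp: bergman_def)

lemma bnorm_eq_sqrt_suminf:
  assumes "f \<in> bergman"
  shows "bnorm f = sqrt (\<Sum>n. (cmod (tcoeff f n))\<^sup>2 * disc_moment n 1)"
  using assms sums_set_integral_disc[of f] by (simp add: bergman_iff_summable bnorm_def sums_iff)

section \<open>Surjectivity modulo \<open>X\<close>\<close>

lemma disc_moment_antimono:
  assumes "m \<le> n" "r \<le> 1"
  shows "disc_moment n r \<le> disc_moment m r"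
proof -
  have integrable: "set_integrable lborel (ball 0 r) (\<lambda>z::complex. cmod z ^ (2 * k))" for k
    by (intro set_integrable_ball_continuous continuous_intros)
  show ?thesis
    unfolding disc_moment_def
    by (rule set_integral_mono[OF integrable integrable]) (use assms in \<open>auto intro: power_decreasing\<close>)
qed

lemma sums_even_reindex:
  assumes "\<And>n. odd n \<Longrightarrow> u n = 0"
  shows "(\<lambda>m. u (2 * m)) sums s \<longleftrightarrow> u sums s"
  using assms by (intro sums_mono_reindex) (auto simp: strict_mono_def elim!: oddE)

lemma tcoeff_compose_square:
  assumes "g holomorphic_on ball 0 1"
  shows "tcoeff (\<lambda>z. g (z\<^sup>2)) n = (if even n then tcoeff g (n div 2) else 0)"
proof (rule tcoeff_eqI[of 1])
  fix z :: complex
  assume "z \<in> ball 0 1"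
  then have "z\<^sup>2 \<in> ball 0 1"
    by (simp add: norm_power abs_square_less_1)
  then have "(\<lambda>m. tcoeff g m * (z\<^sup>2) ^ m) sums g (z\<^sup>2)"
    by (rule tcoeff_sums[OF assms])
  then show "(\<lambda>n. (if even n then tcoeff g (n div 2) else 0) * z ^ n) sums g (z\<^sup>2)"
    by (subst sums_even_reindex[symmetric]) (auto simp: power_mult)
qed simp

lemma bergman_compose_square:
  assumes "g \<in> bergman"
  shows "(\<lambda>z. g (z\<^sup>2)) \<in> bergman"
proof -
  have holo: "g holomorphic_on ball 0 1"
    and summable: "summable (\<lambda>n. (cmod (tcoeff g n))\<^sup>2 * disc_moment n 1)"
    using assms by (auto simp: bergman_iff_summable)
  have "(\<lambda>z. g (z\<^sup>2)) holomorphic_on ball 0 1"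
    by (intro holomorphic_on_compose_gen[OF _ holo, unfolded o_def] holomorphic_intros)
      (auto simp: norm_power abs_square_less_1)
  moreover have "summable (\<lambda>m. (cmod (tcoeff g m))\<^sup>2 * disc_moment (2 * m) 1)"
    by (rule summable_comparison_test'[OF summable])
      (auto simp: disc_moment_nonneg intro!: mult_left_mono disc_moment_antimono)
  then obtain s where "(\<lambda>m. (cmod (tcoeff g m))\<^sup>2 * disc_moment (2 * m) 1) sums s"
    by (auto simp: summable_def)
  then have "(\<lambda>n. (cmod (tcoeff (\<lambda>z. g (z\<^sup>2)) n))\<^sup>2 * disc_moment n 1) sums s"
    by (subst sums_even_reindex[symmetric]) (auto simp: tcoeff_compose_square[OF holo])
  then have "summable (\<lambda>n. (cmod (tcoeff (\<lambda>z. g (z\<^sup>2)) n))\<^sup>2 * disc_moment n 1)"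
    by (rule sums_summable)
  ultimately show ?thesis
    by (simp add: bergman_iff_summable)
qed

lemma collatzN_double: "collatzN (2 * m) = m"
  by (simp add: collatzN_def collatzT_def)

lemma collatzOp_compose_square:
  assumes "g holomorphic_on ball 0 1" "z \<in> ball 0 1"
  shows "collatzOp (\<lambda>z. g (z\<^sup>2)) z = g z"
proof -
  have "(\<lambda>n. tcoeff (\<lambda>z. g (z\<^sup>2)) n * z ^ collatzN n) sums g z"
    using tcoeff_sums[OF assms]
    by (subst sums_even_reindex[symmetric]) (auto simp: tcoeff_compose_square[OF assms(1)] collatzN_double)
  then show ?thesis
    by (simp add: collatzOp_def sums_iff)
qed

section \<open>Density of the kernels under the Collatz conjecture\<close>

lemma bnorm_minus_taylor_polynomial_tendsto:
  assumes "f \<in> bergman"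
  shows "(\<lambda>N. bnorm (\<lambda>z. f z - (\<Sum>n<N. tcoeff f n * z ^ n))) \<longlonglongrightarrow> 0"
proof -
  have holo: "f holomorphic_on ball 0 1"
    and summable: "summable (\<lambda>n. (cmod (tcoeff f n))\<^sup>2 * disc_moment n 1)" (is "summable ?t")
    using assms by (auto simp: bergman_iff_summable)
  define R where "R N z = f z - (\<Sum>n<N. tcoeff f n * z ^ n)" for N z
  have tcoeff_R: "tcoeff (R N) n = (if n < N then 0 else tcoeff f n)" for N n
  proof (rule tcoeff_eqI[of 1])
    fix z :: complex
    assume "z \<in> ball 0 1"
    from sums_diff[OF tcoeff_sums[OF holo this] sums_If_finite_set[of "{..<N}" "\<lambda>n. tcoeff f n * z ^ n"]]
    have "(\<lambda>n. tcoeff f n * z ^ n - (if n \<in> {..<N} then tcoeff f n * z ^ n else 0)) sums R N z"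
      by (simp add: R_def)
    then show "(\<lambda>n. (if n < N then 0 else tcoeff f n) * z ^ n) sums R N z"
      by (rule sums_cong[THEN iffD1, rotated]) simp
  qed simp
  have tail: "(\<lambda>n. (cmod (tcoeff (R N) n))\<^sup>2 * disc_moment n 1) sums (suminf ?t - (\<Sum>n<N. ?t n))" for N
    using sums_diff[OF summable_sums[OF summable] sums_If_finite_set[of "{..<N}" ?t]]
    by (rule sums_cong[THEN iffD1, rotated]) (auto simp: tcoeff_R)
  have R_bergman: "R N \<in> bergman" for N
    using tail unfolding bergman_iff_summable R_def
    by (auto intro!: holomorphic_intros holo simp: sums_iff)
  have bnorm_R: "bnorm (R N) = sqrt (suminf ?t - (\<Sum>n<N. ?t n))" for N
    using bnorm_eq_sqrt_suminf[OF R_bergman] tail by (simp add: sums_iff)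
  have "(\<lambda>N. sqrt (suminf ?t - (\<Sum>n<N. ?t n))) \<longlonglongrightarrow> sqrt (suminf ?t - suminf ?t)"
    by (intro tendsto_intros summable_LIMSEQ summable)
  then have "(\<lambda>N. bnorm (R N)) \<longlonglongrightarrow> 0"
    by (simp add: bnorm_R)
  then show ?thesis
    unfolding R_def .
qed

text \<open>Iterating \<^const>\<open>collatzOp\<close> on a polynomial only changes the exponent map \<open>e\<close>,
  which need not stay injective.\<close>

definition monomial_sum :: "(nat \<Rightarrow> complex) \<Rightarrow> (nat \<Rightarrow> nat) \<Rightarrow> nat set \<Rightarrow> complex \<Rightarrow> complex" where
  "monomial_sum c e F z = (\<Sum>k\<in>F. c k * z ^ e k)"

lemma monomial_sum_group:
  fixes c :: "nat \<Rightarrow> 'a::comm_semiring_1"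
  assumes "finite F" "finite M" "e ` F \<subseteq> M"
  shows "(\<Sum>m\<in>M. (\<Sum>k | k \<in> F \<and> e k = m. c k) * z ^ h m) = (\<Sum>k\<in>F. c k * z ^ h (e k))"
proof -
  have "(\<Sum>k | k \<in> F \<and> e k = m. c k) * z ^ h m = (\<Sum>k | k \<in> F \<and> e k = m. c k * z ^ h (e k))" for m
    by (simp add: sum_distrib_right)
  then have "(\<Sum>m\<in>M. (\<Sum>k | k \<in> F \<and> e k = m. c k) * z ^ h m) = (\<Sum>m\<in>M. \<Sum>k | k \<in> F \<and> e k = m. c k * z ^ h (e k))"
    by simp
  also have "\<dots> = (\<Sum>k\<in>F. c k * z ^ h (e k))"
    using sum.group[OF assms, of "\<lambda>k. c k * z ^ h (e k)"] by simp
  finally show ?thesis .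
qed

lemma tcoeff_monomial_sum:
  assumes "finite F"
  shows "tcoeff (monomial_sum c e F) m = (\<Sum>k | k \<in> F \<and> e k = m. c k)"
proof (rule tcoeff_eqI[of 1])
  fix z :: complex
  have empty: "m \<notin> e ` F \<Longrightarrow> {k \<in> F. e k = m} = {}" for m
    by auto
  have "(\<lambda>m. (\<Sum>k | k \<in> F \<and> e k = m. c k) * z ^ m) sums (\<Sum>m\<in>e ` F. (\<Sum>k | k \<in> F \<and> e k = m. c k) * z ^ m)"
    by (rule sums_finite) (use assms in \<open>auto simp: empty\<close>)
  then show "(\<lambda>m. (\<Sum>k | k \<in> F \<and> e k = m. c k) * z ^ m) sums monomial_sum c e F z"
    using monomial_sum_group[OF assms finite_imageI[OF assms] order_refl, where c=c and z=z and h=id]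
    by (simp add: monomial_sum_def)
qed simp

lemma collatzOp_monomial_sum:
  assumes "finite F"
  shows "collatzOp (monomial_sum c e F) = monomial_sum c (collatzN \<circ> e) F"
proof
  fix z
  have empty: "m \<notin> e ` F \<Longrightarrow> {k \<in> F. e k = m} = {}" for m
    by auto
  have "collatzOp (monomial_sum c e F) z = (\<Sum>m. (\<Sum>k | k \<in> F \<and> e k = m. c k) * z ^ collatzN m)"
    by (simp add: collatzOp_def tcoeff_monomial_sum[OF assms])
  also have "\<dots> = (\<Sum>m\<in>e ` F. (\<Sum>k | k \<in> F \<and> e k = m. c k) * z ^ collatzN m)"
    by (rule suminf_finite) (use assms in \<open>auto simp: empty\<close>)
  also have "\<dots> = monomial_sum c (collatzN \<circ> e) F z"
    using monomial_sum_group[OF assms finite_imageI[OF assms] order_refl, where c=c and z=z and h=collatzN]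
    by (simp add: monomial_sum_def)
  finally show "collatzOp (monomial_sum c e F) z = monomial_sum c (collatzN \<circ> e) F z" .
qed

lemma funpow_collatzOp_monomial_sum:
  assumes "finite F"
  shows "(collatzOp ^^ n) (monomial_sum c e F) = monomial_sum c ((collatzN ^^ n) \<circ> e) F"
  by (induction n) (simp_all add: collatzOp_monomial_sum[OF assms] comp_def)

lemma inX_monomial_sum:
  assumes "finite F" "\<And>k. k \<in> F \<Longrightarrow> e k \<le> 2"
  shows "inX (monomial_sum c e F)"
proof -
  let ?a = "\<lambda>m. \<Sum>k | k \<in> F \<and> e k = m. c k"
  have "e ` F \<subseteq> {0, 1, 2}"
    using assms(2) by force
  then have "monomial_sum c e F z = ?a 0 + ?a 1 * z + ?a 2 * z\<^sup>2" for z
    using monomial_sum_group[OF assms(1), where M="{0, 1, 2}" and e=e and c=c and z=z and h=id]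
    by (simp add: monomial_sum_def power2_eq_square ac_simps)
  then show ?thesis
    unfolding inX_def by blast
qed

lemma monomial_sum_bergman: "monomial_sum c e F \<in> bergman"
  unfolding bergman_def monomial_sum_def[abs_def]
  by (auto intro!: holomorphic_intros set_integrable_ball_continuous continuous_intros)

lemma collatzT_nonneg: "0 \<le> n \<Longrightarrow> 0 \<le> collatzT n"
  by (simp add: collatzT_def)

lemma int_funpow_collatzN: "int ((collatzN ^^ j) n) = (collatzT ^^ j) (int n)"
proof (induction j)
  case (Suc j)
  then have "0 \<le> (collatzT ^^ j) (int n)"
    by (metis of_nat_0_le_iff)
  with Suc show ?case
    by (simp add: collatzN_def collatzT_nonneg)
qed simp

lemma collatzN_le_2: "m \<le> 2 \<Longrightarrow> collatzN m \<le> 2"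
  by (auto simp: le_Suc_eq numeral_2_eq_2 collatzN_def collatzT_def)

lemma funpow_collatzN_le_2: "m \<le> 2 \<Longrightarrow> (collatzN ^^ i) m \<le> 2"
  by (induction i) (auto intro: collatzN_le_2)

lemma eventually_funpow_collatzN_le_2:
  assumes collatz_conjecture
  shows "eventually (\<lambda>i. (collatzN ^^ i) k \<le> 2) sequentially"
proof -
  obtain j where j: "(collatzN ^^ j) k \<le> 2"
  proof (cases "k = 0")
    case False
    then obtain j where "(collatzT ^^ j) (int k) = 1"
      using assms unfolding collatz_conjecture_def by force
    then have "(collatzN ^^ j) k = 1"
      using int_funpow_collatzN[of j k] by simp
    then show ?thesis
      by (intro that[of j]) simp
  qed (use that[of 0] in simp)
  have "(collatzN ^^ i) k \<le> 2" if "i \<ge> j" for i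
    using funpow_collatzN_le_2[OF j, of "i - j"] that
    by (metis funpow_add le_add_diff_inverse2 o_apply)
  then show ?thesis
    by (auto simp: eventually_sequentially)
qed

lemma collatz_polynomial_eventually_inX:
  assumes collatz_conjecture "finite F"
  shows "\<exists>n\<ge>1. inX ((collatzOp ^^ n) (monomial_sum c id F))"
proof -
  have "eventually (\<lambda>n. n \<ge> 1 \<and> (\<forall>k\<in>F. (collatzN ^^ n) k \<le> 2)) sequentially"
    using eventually_ge_at_top eventually_funpow_collatzN_le_2[OF assms(1)] assms(2)
    by (auto simp: eventually_ball_finite eventually_conj)
  then obtain n where "n \<ge> 1" "\<forall>k\<in>F. (collatzN ^^ n) k \<le> 2"
    by (auto simp: eventually_sequentially)
  then show ?thesis
    by (auto simp: funpow_collatzOp_monomial_sum[OF assms(2)] intro!: inX_monomial_sum assms(2))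
qed

theorem mainTheorem1:
  shows "(\<forall>g\<in>bergman. \<exists>f\<in>bergman. inX (\<lambda>z. collatzOp f z - g z))
    \<and> (collatz_conjecture \<longrightarrow>
        (\<forall>f\<in>bergman. \<forall>\<epsilon>>0. \<exists>n\<ge>1. \<exists>g\<in>bergman.
            inX ((collatzOp ^^ n) g) \<and>
            (\<exists>p. inX p \<and> bnorm (\<lambda>z. f z - g z - p z) < \<epsilon>)))"
proof (intro conjI ballI impI allI)
  fix g
  assume g: "g \<in> bergman"
  have "inX (\<lambda>z. collatzOp (\<lambda>z. g (z\<^sup>2)) z - g z)"
    using g unfolding inX_def by (intro exI[of _ 0]) (simp add: collatzOp_compose_square bergman_def)
  with bergman_compose_square[OF g] show "\<exists>f\<in>bergman. inX (\<lambda>z. collatzOp f z - g z)"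
    by blast
next
  fix f :: "complex \<Rightarrow> complex" and \<epsilon> :: real
  assume collatz: collatz_conjecture and f: "f \<in> bergman" and "\<epsilon> > 0"
  define P where "P N = monomial_sum (tcoeff f) id {..<N}" for N
  have "eventually (\<lambda>N. bnorm (\<lambda>z. f z - P N z) < \<epsilon>) sequentially"
    using order_tendstoD(2)[OF bnorm_minus_taylor_polynomial_tendsto[OF f] \<open>\<epsilon> > 0\<close>]
    by (simp add: P_def monomial_sum_def)
  then obtain N where N: "bnorm (\<lambda>z. f z - P N z - 0) < \<epsilon>"
    by (auto simp: eventually_sequentially)
  obtain n where "n \<ge> 1" "inX ((collatzOp ^^ n) (P N))"
    using collatz_polynomial_eventually_inX[OF collatz] by (auto simp: P_def)
  moreover have "inX (\<lambda>z. 0)"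
    unfolding inX_def by (intro exI[of _ 0]) simp
  ultimately show "\<exists>n\<ge>1. \<exists>g\<in>bergman. inX ((collatzOp ^^ n) g) \<and> (\<exists>p. inX p \<and> bnorm (\<lambda>z. f z - g z - p z) < \<epsilon>)"
    using N monomial_sum_bergman unfolding P_def by blast
qed

end
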